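(* Let $K \ge 1$ and let $\mathbf{\Phi} \in \mathbb{R}^{m\times n}$ satisfy the RIP with $\delta_{K+1} < \frac{1}{\sqrt{K}+1}$. Let $\mathbf{x} \in \mathbb{R}^n$ with $|\mathrm{supp}(\mathbf{x})| = K$, let $\mathbf{v} \in \mathbb{R}^m$, and let $\mathbf{y} = \mathbf{\Phi}\mathbf{x} + \mathbf{v}$. If $$\sqrt{\mathrm{SNR}} > \frac{2\sqrt{K}\,(1+\delta_{K+1})}{\bigl(1-(\sqrt{K}+1)\delta_{K+1}\bigr)\sqrt{\mathrm{MAR}}},$$ then OMP run for $K$ iterations on $(\mathbf{\Phi},\mathbf{y},K)$ selects an index of $\mathrm{supp}(\mathbf{x})$ at every iteration (regardless of how ties are broken), so that its output satisfies $\mathcal{T}^K = \mathrm{supp}(\mathbf{x})$.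
   Context: Notation: $\Omega=\{1,\dots,n\}$; $\phi_i$ denotes the $i$-th column of $\mathbf{\Phi}$; $\mathbf{\Phi}'$ is the transpose; for $\mathcal{S}\subseteq\Omega$, $\mathbf{\Phi}_{\mathcal{S}}$ is the submatrix of columns indexed by $\mathcal{S}$ and $\mathbf{x}_{\mathcal{S}}$ the restriction of $\mathbf{x}$ to $\mathcal{S}$. A vector is $K$-sparse if it has at most $K$ nonzero entries. RIP: for an integer $s\ge1$, the isometry constant $\delta_s$ of $\mathbf{\Phi}$ is the smallest $c\in[0,1)$ such that $(1-c)\|\mathbf{z}\|_2^2 \le \|\mathbf{\Phi}\mathbf{z}\|_2^2 \le (1+c)\|\mathbf{z}\|_2^2$ for all $s$-sparse $\mathbf{z}\in\mathbb{R}^n$; "$\mathbf{\Phi}$ satisfies the RIP with $\delta_s<a$" means such a constant exists and is $<a$. $\mathrm{SNR} := \|\mathbf{\Phi}\mathbf{x}\|_2^2/\|\mathbf{v}\|_2^2$ (taken as $+\infty$ if $\mathbf{v}=\mathbf{0}$), and with $\mathcal{T}=\mathrm{supp}(\mathbf{x})$, $\mathrm{MAR} := \dfrac{\min_{j\in\mathcal{T}}|x_j|^2}{\|\mathbf{x}\|_2^2/K}$. OMP (orthogonal matching pursuit) with input $\mathbf{\Phi},\mathbf{y},K$: set $\mathcal{T}^0=\emptyset$, $\mathbf{r}^0=\mathbf{y}$; for $k=1,\dots,K$: choose $t^k \in \arg\max_{i\in\Omega\setminus\mathcal{T}^{k-1}} |\langle\phi_i,\mathbf{r}^{k-1}\rangle|$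 (ties broken arbitrarily), set $\mathcal{T}^k=\mathcal{T}^{k-1}\cup\{t^k\}$, $\mathbf{x}^k = \arg\min_{\mathbf{u}:\,\mathrm{supp}(\mathbf{u})\subseteq\mathcal{T}^k}\|\mathbf{y}-\mathbf{\Phi}\mathbf{u}\|_2$ (least squares on $\mathcal{T}^k$), and $\mathbf{r}^k=\mathbf{y}-\mathbf{\Phi}\mathbf{x}^k$. Output: $\mathcal{T}^K$ and $\mathbf{x}^K$. *)

theory Defs
  imports "HOL-Analysis.Analysis"
begin

definition supp :: "real^'n \<Rightarrow> 'n set" where
  "supp z = {i. z $ i \<noteq> 0}"

definition sparse :: "nat \<Rightarrow> real^'n \<Rightarrow> bool" where
  "sparse s z \<longleftrightarrow> card (supp z) \<le> s"

definition rip_bound :: "real^'n^'m \<Rightarrow> nat \<Rightarrow> real \<Rightarrow> bool" where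
  "rip_bound Phi s c \<longleftrightarrow> 0 \<le> c \<and> c < 1 \<and>
     (\<forall>z. sparse s z \<longrightarrow>
        (1 - c) * norm z ^ 2 \<le> norm (Phi *v z) ^ 2 \<and>
        norm (Phi *v z) ^ 2 \<le> (1 + c) * norm z ^ 2)"

definition rip_delta :: "real^'n^'m \<Rightarrow> nat \<Rightarrow> real" where
  "rip_delta Phi s = Inf {c. rip_bound Phi s c}"

text \<open>Least-squares residual on index set T (unique, independent of the minimiser chosen).\<close>
definition ls_residual :: "real^'n^'m \<Rightarrow> real^'m \<Rightarrow> 'n set \<Rightarrow> real^'m" where
  "ls_residual Phi y T = y - Phi *v (SOME u. supp u \<subseteq> T \<and>
      (\<forall>w. supp w \<subseteq> T \<longrightarrow> norm (y - Phi *v u) \<le> norm (y - Phi *v w)))"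

text \<open>t 1, ..., t K is a valid run of OMP (any tie-breaking) on (Phi, y, K).\<close>
definition omp_run :: "real^'n^'m \<Rightarrow> real^'m \<Rightarrow> nat \<Rightarrow> (nat \<Rightarrow> 'n) \<Rightarrow> bool" where
  "omp_run Phi y K t \<longleftrightarrow>
     (\<forall>k\<in>{1..K}.
        let Tprev = t ` {1..<k}; r = ls_residual Phi y Tprev in
        t k \<notin> Tprev \<and>
        (\<forall>i. i \<notin> Tprev \<longrightarrow> \<bar>column i Phi \<bullet> r\<bar> \<le> \<bar>column (t k) Phi \<bullet> r\<bar>))"

definition MAR :: "real^'n \<Rightarrow> real" where
  "MAR x = Min ((\<lambda>j. \<bar>x $ j\<bar> ^ 2) ` supp x) / (norm x ^ 2 / real (card (supp x)))"

end

theory Submission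
  imports Defs
begin

text \<open>Let T be the indices chosen so far, all in supp x, and let P be the orthogonal projection
  onto the complement of the span of the columns indexed by T, so that the OMP residual is
  P (Phi x) + P v. On vectors supported off T, P Phi inherits the RIP bounds of Phi. Writing x' for
  the part of x off T and s = card (supp x - T), this gives a correct column whose correlation with
  the residual is at least ((1 - \<delta>) norm x' - sqrt (1 + \<delta>) norm v) / sqrt s, while polarization bounds
  the correlation of every incorrect column by \<delta> norm x' + sqrt (1 + \<delta>) norm v. As
  norm x' \<ge> sqrt s times the smallest nonzero entry of x, the SNR condition makes a wrong choice
  impossible, and K correct distinct choices exhaust supp x.\<close>

lemma supp_add_subset: "supp (a + b) \<subseteq> supp a \<union> supp b"
  by (auto simp: supp_def)

lemma supp_diff_subset: "supp (a - b) \<subseteq> supp a \<union> supp b"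
  by (auto simp: supp_def)

lemma supp_scaleR_subset: "supp (c *\<^sub>R a) \<subseteq> supp a"
  by (auto simp: supp_def)

lemma supp_zero [simp]: "supp 0 = {}"
  by (auto simp: supp_def)

lemma supp_eq_empty_iff [simp]: "supp z = {} \<longleftrightarrow> z = 0"
  by (auto simp: supp_def vec_eq_iff)

lemma supp_axis: "supp (axis j 1) = {j}"
  by (auto simp: supp_def axis_def)

lemma inner_eq_0_if_disjoint_supp:
  "supp a \<inter> supp b = {} \<Longrightarrow> a \<bullet> (b :: real^'n) = 0"
  unfolding inner_vec_def by (rule sum.neutral) (auto simp: supp_def)

lemma norm_add_sq_disjoint_supp:
  "supp a \<inter> supp b = {} \<Longrightarrow> norm (a + b :: real^'n)^2 = norm a^2 + norm b^2"
  by (rule norm_add_Pythagorean) (simp add: orthogonal_def inner_eq_0_if_disjoint_supp)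

lemma norm_sq_eq_sum_supp:
  "supp z \<subseteq> A \<Longrightarrow> norm (z :: real^'n)^2 = (\<Sum>i\<in>A. (z $ i)^2)"
  unfolding norm_vec_def L2_set_def
  by (simp add: sum_nonneg) (rule sum.mono_neutral_right, auto simp: supp_def)

lemma matrix_vector_mult_inner_supp:
  "supp z \<subseteq> A \<Longrightarrow> (Phi *v z) \<bullet> r = (\<Sum>i\<in>A. z $ i * (column i Phi \<bullet> r))"
  unfolding matrix_mult_sum inner_sum_left scalar_mult_eq_scaleR inner_scaleR_left
  by (rule sum.mono_neutral_right) (auto simp: supp_def)

definition vec_restrict :: "'n set \<Rightarrow> real^'n \<Rightarrow> real^'n" where
  "vec_restrict A z = (\<chi> i. if i \<in> A then z $ i else 0)"

lemma vec_restrict_nth: "vec_restrict A z $ i = (if i \<in> A then z $ i else 0)"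
  by (simp add: vec_restrict_def)

lemma supp_vec_restrict [simp]: "supp (vec_restrict A z) = A \<inter> supp z"
  by (auto simp: supp_def vec_restrict_nth)

lemma rip_bound_nonneg: "rip_bound Phi s d \<Longrightarrow> 0 \<le> d"
  by (simp add: rip_bound_def)

lemma rip_bound_lower:
  "rip_bound Phi s d \<Longrightarrow> card (supp z) \<le> s \<Longrightarrow> (1 - d) * norm z^2 \<le> norm (Phi *v z)^2"
  by (simp add: rip_bound_def sparse_def)

lemma rip_bound_upper:
  "rip_bound Phi s d \<Longrightarrow> card (supp z) \<le> s \<Longrightarrow> norm (Phi *v z)^2 \<le> (1 + d) * norm z^2"
  by (simp add: rip_bound_def sparse_def)

lemma norm_le_sqrt_mult_if_sq_le:
  "a^2 \<le> c * b^2 \<Longrightarrow> 0 \<le> b \<Longrightarrow> a \<le> sqrt c * (b :: real)"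
  by (metis real_le_rsqrt real_sqrt_abs real_sqrt_mult abs_of_nonneg)

lemma rip_bound_norm_column:
  assumes "rip_bound Phi s d" "1 \<le> s"
  shows "norm (column j Phi) \<le> sqrt (1 + d)"
proof -
  have "norm (Phi *v axis j 1)^2 \<le> (1 + d) * norm (axis j (1::real))^2"
    using assms by (intro rip_bound_upper) (simp_all add: supp_axis)
  then show ?thesis
    using norm_le_sqrt_mult_if_sq_le by (fastforce simp: matrix_vector_mult_basis)
qed

text \<open>The infimum defining the isometry constant is attained, since the admissible constants
  form a closed half-line.\<close>

lemma rip_bound_rip_delta:
  assumes "\<exists>c. rip_bound Phi s c"
  shows "rip_bound Phi s (rip_delta Phi s)"
proof -
  let ?C = "{c. rip_bound Phi s c}"
  obtain c0 where c0: "rip_bound Phi s c0"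
    using assms by blast
  have ne: "?C \<noteq> {}" and bdd: "bdd_below ?C"
    using c0 by (auto intro!: bdd_belowI[of _ 0] simp: rip_bound_def)
  have "0 \<le> rip_delta Phi s" "rip_delta Phi s \<le> c0"
    unfolding rip_delta_def using c0
    by (auto intro!: cInf_greatest cInf_lower bdd simp: rip_bound_def)
  moreover have "\<bar>norm (Phi *v z)^2 - norm z^2\<bar> \<le> rip_delta Phi s * norm z^2"
    if "sparse s z" for z
  proof (cases "z = 0")
    case False
    then have pos: "0 < norm z^2"
      by simp
    have "\<bar>norm (Phi *v z)^2 - norm z^2\<bar> / norm z^2 \<le> rip_delta Phi s"
      unfolding rip_delta_def
    proof (rule cInf_greatest[OF ne])
      fix c assume "c \<in> ?C"
      then show "\<bar>norm (Phi *v z)^2 - norm z^2\<bar> / norm z^2 \<le> c"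
        using \<open>sparse s z\<close> pos by (auto simp: rip_bound_def divide_le_eq abs_le_iff algebra_simps)
    qed
    then show ?thesis
      using pos by (simp add: divide_le_eq)
  qed simp
  ultimately show ?thesis
    using c0 by (auto simp: rip_bound_def abs_le_iff algebra_simps)
qed

definition orth_cols :: "real^'n^'m \<Rightarrow> 'n set \<Rightarrow> real^'m \<Rightarrow> bool" where
  "orth_cols Phi T r \<longleftrightarrow> (\<forall>w. supp w \<subseteq> T \<longrightarrow> r \<bullet> (Phi *v w) = 0)"

lemma orth_cols_norm_add_sq:
  assumes "orth_cols Phi T r" "supp c \<subseteq> T"
  shows "norm (r + Phi *v c)^2 = norm r^2 + norm (Phi *v c)^2"
  using assms by (intro norm_add_Pythagorean) (simp add: orth_cols_def orthogonal_def)

lemma exists_orth_cols_residual: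
  fixes Phi :: "real^'n^'m"
  shows "\<exists>a. supp a \<subseteq> T \<and> orth_cols Phi T (b - Phi *v a)"
proof -
  define V where "V = (\<lambda>w. Phi *v w) ` {w. supp w \<subseteq> T}"
  have "subspace {w :: real^'n. supp w \<subseteq> T}"
  proof (rule subspaceI)
    show "x + y \<in> {w. supp w \<subseteq> T}" if "x \<in> {w. supp w \<subseteq> T}" "y \<in> {w. supp w \<subseteq> T}" for x y
      using that supp_add_subset[of x y] by blast
    show "c *\<^sub>R x \<in> {w. supp w \<subseteq> T}" if "x \<in> {w. supp w \<subseteq> T}" for c x
      using that supp_scaleR_subset[of c x] by blast
  qed simp
  then have "subspace V"
    unfolding V_def by (rule linear_subspace_image[rotated]) (simp add: matrix_vector_mul_linear)
  then have span_V: "span V = V"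
    by (rule span_eq_iff[THEN iffD2])
  obtain p z where p: "p \<in> span V" and z: "\<And>u. u \<in> span V \<Longrightarrow> orthogonal z u"
    and b: "b = p + z"
    using orthogonal_subspace_decomp_exists[of V b] by blast
  obtain a where a: "supp a \<subseteq> T" "p = Phi *v a"
    using p unfolding span_V unfolding V_def by blast
  have "orth_cols Phi T (b - Phi *v a)"
    unfolding orth_cols_def
  proof (intro allI impI)
    fix w :: "real^'n" assume "supp w \<subseteq> T"
    then have "Phi *v w \<in> span V"
      unfolding span_V unfolding V_def by blast
    then show "(b - Phi *v a) \<bullet> (Phi *v w) = 0"
      using z a b by (simp add: orthogonal_def)
  qed
  with a show ?thesis
    by blast
qed

text \<open>The least-squares residual is the orthogonal projection of y onto the orthogonal
  complement of the span of the columns indexed by T.\<close>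

lemma ls_residual_eqI:
  assumes a: "supp a \<subseteq> T" and orth: "orth_cols Phi T (y - Phi *v a)"
  shows "ls_residual Phi y T = y - Phi *v a"
proof -
  have pythagoras: "norm (y - Phi *v w)^2 = norm (y - Phi *v a)^2 + norm (Phi *v (a - w))^2"
    if "supp w \<subseteq> T" for w
  proof -
    have "supp (a - w) \<subseteq> T"
      using a that supp_diff_subset by blast
    moreover have "y - Phi *v w = (y - Phi *v a) + Phi *v (a - w)"
      by (simp add: matrix_vector_mult_diff_distrib)
    ultimately show ?thesis
      by (simp only: orth_cols_norm_add_sq[OF orth])
  qed
  define P where "P u \<longleftrightarrow> supp u \<subseteq> T \<and>
      (\<forall>w. supp w \<subseteq> T \<longrightarrow> norm (y - Phi *v u) \<le> norm (y - Phi *v w))" for u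
  have "P a"
    unfolding P_def
  proof (intro conjI allI impI a)
    fix w assume "supp w \<subseteq> T"
    then have "norm (y - Phi *v a)^2 \<le> norm (y - Phi *v w)^2"
      using pythagoras by simp
    then show "norm (y - Phi *v a) \<le> norm (y - Phi *v w)"
      by (rule power2_le_imp_le) simp
  qed
  define u where "u = (SOME u. P u)"
  have "P u"
    unfolding u_def using \<open>P a\<close> by (rule someI)
  then have "norm (y - Phi *v u) \<le> norm (y - Phi *v a)" and "supp u \<subseteq> T"
    using a by (auto simp: P_def)
  then have "norm (Phi *v (a - u))^2 \<le> 0"
    using pythagoras[of u] power_mono[of "norm (y - Phi *v u)" "norm (y - Phi *v a)" 2] by simp
  then have "Phi *v u = Phi *v a"
    by (simp add: matrix_vector_mult_diff_distrib)
  then show ?thesis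
    unfolding ls_residual_def P_def[symmetric] u_def[symmetric] by simp
qed

lemma ls_residual_decomp:
  fixes Phi :: "real^'n^'m"
  obtains a where "supp a \<subseteq> T" "ls_residual Phi y T = y - Phi *v a"
    "orth_cols Phi T (ls_residual Phi y T)"
proof -
  obtain a where "supp a \<subseteq> T" "orth_cols Phi T (y - Phi *v a)"
    using exists_orth_cols_residual by blast
  with ls_residual_eqI[OF this] that show thesis
    by simp
qed

lemma linear_ls_residual:
  fixes Phi :: "real^'n^'m"
  shows "linear (\<lambda>y. ls_residual Phi y T)"
proof (rule linearI)
  fix y y' :: "real^'m" and c :: real
  obtain a where a: "supp a \<subseteq> T" "ls_residual Phi y T = y - Phi *v a"
      "orth_cols Phi T (ls_residual Phi y T)"
    by (rule ls_residual_decomp)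
  obtain a' where a': "supp a' \<subseteq> T" "ls_residual Phi y' T = y' - Phi *v a'"
      "orth_cols Phi T (ls_residual Phi y' T)"
    by (rule ls_residual_decomp)
  have add: "(y + y') - Phi *v (a + a') = ls_residual Phi y T + ls_residual Phi y' T"
    unfolding a(2) a'(2) by (simp add: matrix_vector_right_distrib)
  have "supp (a + a') \<subseteq> T"
    using a(1) a'(1) supp_add_subset[of a a'] by blast
  moreover have "orth_cols Phi T ((y + y') - Phi *v (a + a'))"
    using a(3) a'(3) unfolding add by (simp add: orth_cols_def inner_add_left)
  ultimately show "ls_residual Phi (y + y') T = ls_residual Phi y T + ls_residual Phi y' T"
    unfolding add[symmetric] by (rule ls_residual_eqI)
  have scale: "c *\<^sub>R y - Phi *v (c *\<^sub>R a) = c *\<^sub>R ls_residual Phi y T"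
    unfolding a(2) by (simp add: matrix_vector_mult_scaleR scaleR_diff_right)
  have "supp (c *\<^sub>R a) \<subseteq> T"
    using a(1) supp_scaleR_subset[of c a] by blast
  moreover have "orth_cols Phi T (c *\<^sub>R y - Phi *v (c *\<^sub>R a))"
    using a(3) unfolding scale by (simp add: orth_cols_def)
  ultimately show "ls_residual Phi (c *\<^sub>R y) T = c *\<^sub>R ls_residual Phi y T"
    unfolding scale[symmetric] by (rule ls_residual_eqI)
qed

lemma ls_residual_matrix_vector_mult:
  fixes Phi :: "real^'n^'m"
  assumes "supp c \<subseteq> T"
  shows "ls_residual Phi (Phi *v c) T = 0"
  using ls_residual_eqI[OF assms, of Phi "Phi *v c"] by (simp add: orth_cols_def)

lemma inner_ls_residual:
  fixes Phi :: "real^'n^'m"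
  shows "ls_residual Phi y T \<bullet> y' = ls_residual Phi y T \<bullet> ls_residual Phi y' T"
proof -
  obtain a' where a': "supp a' \<subseteq> T" "ls_residual Phi y' T = y' - Phi *v a'"
    by (rule ls_residual_decomp)
  obtain a where "orth_cols Phi T (ls_residual Phi y T)"
    by (rule ls_residual_decomp)
  then have "ls_residual Phi y T \<bullet> (Phi *v a') = 0"
    using a'(1) unfolding orth_cols_def by blast
  then show ?thesis
    unfolding a'(2) inner_diff_right by simp
qed

lemma norm_ls_residual_le:
  fixes Phi :: "real^'n^'m"
  shows "norm (ls_residual Phi y T) \<le> norm y"
proof -
  obtain a where a: "supp a \<subseteq> T" "ls_residual Phi y T = y - Phi *v a"
    "orth_cols Phi T (ls_residual Phi y T)"
    by (rule ls_residual_decomp)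
  have "norm y^2 = norm (ls_residual Phi y T)^2 + norm (Phi *v a)^2"
    using orth_cols_norm_add_sq[OF a(3) a(1)] a(2) by simp
  then have "norm (ls_residual Phi y T)^2 \<le> norm y^2"
    by simp
  then show ?thesis
    by (rule power2_le_imp_le) simp
qed

lemma rip_bound_ls_residual:
  fixes Phi :: "real^'n^'m"
  assumes rip: "rip_bound Phi s d" and disj: "supp z \<inter> T = {}" and card: "card (T \<union> supp z) \<le> s"
  shows "(1 - d) * norm z^2 \<le> norm (ls_residual Phi (Phi *v z) T)^2"
    and "norm (ls_residual Phi (Phi *v z) T)^2 \<le> (1 + d) * norm z^2"
proof -
  obtain a where a: "supp a \<subseteq> T" "ls_residual Phi (Phi *v z) T = Phi *v z - Phi *v a"
    by (rule ls_residual_decomp)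
  have "supp (z - a) \<subseteq> T \<union> supp z"
    using a(1) supp_diff_subset[of z a] by blast
  then have card_za: "card (supp (z - a)) \<le> s"
    using card card_mono[OF finite] le_trans by blast
  have "norm (z - a)^2 = norm z^2 + norm a^2"
    using norm_add_sq_disjoint_supp[of z "- a"] disj a(1) by (auto simp: supp_def)
  then have "norm z^2 \<le> norm (z - a)^2"
    by simp
  then have "(1 - d) * norm z^2 \<le> (1 - d) * norm (z - a)^2"
    using rip by (intro mult_left_mono) (simp_all add: rip_bound_def)
  also have "\<dots> \<le> norm (ls_residual Phi (Phi *v z) T)^2"
    using rip_bound_lower[OF rip card_za] a(2) by (simp add: matrix_vector_mult_diff_distrib)
  finally show "(1 - d) * norm z^2 \<le> norm (ls_residual Phi (Phi *v z) T)^2" .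
  have "card (supp z) \<le> s"
    using card card_mono[of "T \<union> supp z" "supp z"] by auto
  then have "norm (Phi *v z)^2 \<le> (1 + d) * norm z^2"
    by (rule rip_bound_upper[OF rip])
  moreover have "norm (ls_residual Phi (Phi *v z) T)^2 \<le> norm (Phi *v z)^2"
    by (simp add: norm_ls_residual_le power_mono)
  ultimately show "norm (ls_residual Phi (Phi *v z) T)^2 \<le> (1 + d) * norm z^2"
    by linarith
qed

lemma abs_inner_le_if_norm_bounds:
  fixes p q :: "'a::real_inner"
  assumes "0 < a" "0 < b"
    and bounds: "\<And>c. \<bar>c\<bar> = a \<Longrightarrow> (1 - d) * (2 * (a * b)^2) \<le> norm (b *\<^sub>R p + c *\<^sub>R q)^2 \<and>
      norm (b *\<^sub>R p + c *\<^sub>R q)^2 \<le> (1 + d) * (2 * (a * b)^2)"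
  shows "\<bar>p \<bullet> q\<bar> \<le> d * a * b"
proof -
  have polar: "norm (u + w)^2 - norm (u - w)^2 = 4 * (u \<bullet> w)" for u w :: 'a
    by (simp add: power2_norm_eq_inner inner_add_left inner_add_right inner_diff_left
        inner_diff_right inner_commute)
  have "norm (b *\<^sub>R p + a *\<^sub>R q)^2 - norm (b *\<^sub>R p + (- a) *\<^sub>R q)^2 = 4 * (a * b) * (p \<bullet> q)"
    using polar[of "b *\<^sub>R p" "a *\<^sub>R q"] by simp
  moreover have "(1 + d) * (2 * (a * b)^2) - (1 - d) * (2 * (a * b)^2) = 4 * d * (a * b)^2"
    by (simp add: algebra_simps)
  moreover have "\<bar>a\<bar> = a" "\<bar>- a\<bar> = a"
    using \<open>0 < a\<close> by simp_all
  then have "(1 - d) * (2 * (a * b)^2) \<le> norm (b *\<^sub>R p + a *\<^sub>R q)^2"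
    "norm (b *\<^sub>R p + a *\<^sub>R q)^2 \<le> (1 + d) * (2 * (a * b)^2)"
    "(1 - d) * (2 * (a * b)^2) \<le> norm (b *\<^sub>R p + (- a) *\<^sub>R q)^2"
    "norm (b *\<^sub>R p + (- a) *\<^sub>R q)^2 \<le> (1 + d) * (2 * (a * b)^2)"
    using bounds by blast+
  ultimately have "\<bar>4 * (a * b) * (p \<bullet> q)\<bar> \<le> 4 * d * (a * b)^2"
    by (simp only: abs_le_iff) linarith
  then have "(a * b) * \<bar>p \<bullet> q\<bar> \<le> (a * b) * (d * a * b)"
    using \<open>0 < a\<close> \<open>0 < b\<close> by (simp add: abs_mult power2_eq_square algebra_simps)
  then show ?thesis
    using \<open>0 < a\<close> \<open>0 < b\<close> mult_le_cancel_left_pos[of "a * b"] by simp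
qed

text \<open>Polarization turns the two-sided bounds of rip_bound_ls_residual into near-orthogonality
  of the projected images of vectors with disjoint supports.\<close>

lemma rip_bound_inner_ls_residual:
  fixes Phi :: "real^'n^'m"
  assumes rip: "rip_bound Phi s d"
    and disj: "supp z \<inter> T = {}" "supp z' \<inter> T = {}" "supp z \<inter> supp z' = {}"
    and card: "card (T \<union> supp z \<union> supp z') \<le> s"
  shows "\<bar>ls_residual Phi (Phi *v z) T \<bullet> ls_residual Phi (Phi *v z') T\<bar> \<le> d * norm z * norm z'"
proof -
  define f where "f u = ls_residual Phi (Phi *v u) T" for u
  have lin: "linear f"
    using linear_compose[OF matrix_vector_mul_linear linear_ls_residual]
    unfolding f_def comp_def .
  show ?thesis
  proof (cases "z = 0 \<or> z' = 0")
    case True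
    then show ?thesis
      using linear_0[OF lin] by (auto simp: f_def)
  next
    case False
    have "\<bar>f z \<bullet> f z'\<bar> \<le> d * norm z * norm z'"
    proof (rule abs_inner_le_if_norm_bounds)
      fix c assume c: "\<bar>c\<bar> = norm z"
      define u where "u = norm z' *\<^sub>R z + c *\<^sub>R z'"
      have supp_u: "supp u \<subseteq> supp z \<union> supp z'"
        unfolding u_def using supp_add_subset supp_scaleR_subset by blast
      then have "T \<union> supp u \<subseteq> T \<union> supp z \<union> supp z'"
        by blast
      then have card_u: "card (T \<union> supp u) \<le> s"
        using card card_mono[OF finite] le_trans by blast
      have "norm u^2 = norm (norm z' *\<^sub>R z)^2 + norm (c *\<^sub>R z')^2"
        unfolding u_def using disj(3) supp_scaleR_subset[of "norm z'" z] supp_scaleR_subset[of c z']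
        by (intro norm_add_sq_disjoint_supp) blast
      then have "norm u^2 = 2 * (norm z * norm z')^2"
        using c by (simp add: power_mult_distrib)
      moreover have "f u = norm z' *\<^sub>R f z + c *\<^sub>R f z'"
        unfolding u_def using lin by (simp add: linear_add linear_scale)
      moreover have "supp u \<inter> T = {}"
        using supp_u disj by blast
      ultimately show "(1 - d) * (2 * (norm z * norm z')^2) \<le> norm (norm z' *\<^sub>R f z + c *\<^sub>R f z')^2 \<and>
          norm (norm z' *\<^sub>R f z + c *\<^sub>R f z')^2 \<le> (1 + d) * (2 * (norm z * norm z')^2)"
        using rip_bound_ls_residual[OF rip _ card_u] by (simp add: f_def)
    qed (use False in simp_all)
    then show ?thesis
      by (simp add: f_def)
  qed
qed

lemma sum_abs_le_sqrt_card_mult_norm: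
  fixes z :: "real^'n"
  assumes "supp z \<subseteq> A"
  shows "(\<Sum>i\<in>A. \<bar>z $ i\<bar>) \<le> sqrt (card A) * norm z"
proof -
  have "(\<Sum>i\<in>A. \<bar>z $ i\<bar>)^2 \<le> (\<Sum>i\<in>A. \<bar>z $ i\<bar>^2) * (\<Sum>i\<in>A. 1^2)"
    using Cauchy_Schwarz_ineq_sum[of "\<lambda>i. \<bar>z $ i\<bar>" "\<lambda>_. 1" A] by simp
  also have "\<dots> = (sqrt (card A) * norm z)^2"
    using norm_sq_eq_sum_supp[OF assms] by (simp add: power_mult_distrib)
  finally show ?thesis
    by (rule power2_le_imp_le) simp
qed

context
  fixes Phi :: "real^'n^'m" and x :: "real^'n" and v :: "real^'m" and T :: "'n set"
    and K :: nat and d :: real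
  assumes rip: "rip_bound Phi (K + 1) d"
    and card_supp_x: "card (supp x) = K"
    and T_subset: "T \<subseteq> supp x"
begin

abbreviation x_rest :: "real^'n" where
  "x_rest \<equiv> vec_restrict (supp x - T) x"

abbreviation residual :: "real^'m" where
  "residual \<equiv> ls_residual Phi (Phi *v x + v) T"

lemma residual_eq:
  "residual = ls_residual Phi (Phi *v x_rest) T + ls_residual Phi v T"
proof -
  have "supp (x - x_rest) \<subseteq> T"
    by (auto simp: supp_def vec_restrict_nth)
  then have "ls_residual Phi (Phi *v (x - x_rest)) T = 0"
    by (rule ls_residual_matrix_vector_mult)
  moreover have "Phi *v x + v = Phi *v x_rest + Phi *v (x - x_rest) + v"
    by (simp add: matrix_vector_mult_diff_distrib)
  moreover have "ls_residual Phi (a + b) T = ls_residual Phi a T + ls_residual Phi b T" for a b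
    by (rule linear_add[OF linear_ls_residual])
  ultimately show ?thesis
    by simp
qed

lemma card_T_union_supp_x_rest: "card (T \<union> supp x_rest) \<le> K"
  using T_subset card_mono[of "supp x" "T \<union> supp x_rest"] card_supp_x by auto

lemma correct_correlation:
  assumes "supp x - T \<noteq> {}" and "\<forall>i\<in>supp x - T. \<bar>column i Phi \<bullet> residual\<bar> \<le> M"
  shows "(1 - d) * norm x_rest^2 - sqrt (1 + d) * norm x_rest * norm v
    \<le> sqrt (card (supp x - T)) * norm x_rest * M"
proof -
  define h w where "h = ls_residual Phi (Phi *v x_rest) T" and "w = ls_residual Phi v T"
  have "supp x_rest \<inter> T = {}"
    by auto
  then have h_lower: "(1 - d) * norm x_rest^2 \<le> norm h^2"
    and h_upper: "norm h^2 \<le> (1 + d) * norm x_rest^2"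
    using rip_bound_ls_residual[OF rip] card_T_union_supp_x_rest by (auto simp: h_def)
  have "\<bar>w \<bullet> h\<bar> \<le> norm v * (sqrt (1 + d) * norm x_rest)"
    using Cauchy_Schwarz_ineq2[of w h] norm_ls_residual_le[of Phi v T]
      norm_le_sqrt_mult_if_sq_le[OF h_upper norm_ge_zero]
    unfolding w_def by (meson mult_mono norm_ge_zero order_trans)
  moreover have "residual \<bullet> h = norm h^2 + w \<bullet> h"
    using residual_eq unfolding h_def[symmetric] w_def[symmetric]
    by (simp add: inner_add_left power2_norm_eq_inner)
  ultimately have "(1 - d) * norm x_rest^2 - sqrt (1 + d) * norm x_rest * norm v \<le> residual \<bullet> h"
    using h_lower by (simp add: abs_le_iff mult_ac)
  also have "residual \<bullet> h = (Phi *v x_rest) \<bullet> residual"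
    using inner_ls_residual[of Phi "Phi *v x + v" T "Phi *v x_rest"] by (simp add: h_def inner_commute)
  also have "\<dots> = (\<Sum>i\<in>supp x - T. x $ i * (column i Phi \<bullet> residual))"
    by (subst matrix_vector_mult_inner_supp[of _ "supp x - T"]) (auto simp: vec_restrict_nth)
  also have "\<dots> \<le> (\<Sum>i\<in>supp x - T. \<bar>x $ i\<bar> * M)"
  proof (rule sum_mono)
    fix i assume "i \<in> supp x - T"
    then have "\<bar>x $ i\<bar> * \<bar>column i Phi \<bullet> residual\<bar> \<le> \<bar>x $ i\<bar> * M"
      using assms(2) by (simp add: mult_left_mono)
    then show "x $ i * (column i Phi \<bullet> residual) \<le> \<bar>x $ i\<bar> * M"
      using abs_ge_self[of "x $ i * (column i Phi \<bullet> residual)"] unfolding abs_mult by linarith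
  qed
  also have "\<dots> = (\<Sum>i\<in>supp x - T. \<bar>x_rest $ i\<bar>) * M"
    by (simp add: sum_distrib_right vec_restrict_nth)
  also have "\<dots> \<le> sqrt (card (supp x - T)) * norm x_rest * M"
    using assms sum_abs_le_sqrt_card_mult_norm[of x_rest "supp x - T"]
    by (intro mult_right_mono) (auto intro: order_trans[OF abs_ge_zero])
  finally show ?thesis .
qed

lemma wrong_correlation:
  assumes "j \<notin> supp x"
  shows "\<bar>column j Phi \<bullet> residual\<bar> \<le> d * norm x_rest + sqrt (1 + d) * norm v"
proof -
  define e :: "real^'n" where "e = axis j 1"
  define h w where "h = ls_residual Phi (Phi *v x_rest) T" and "w = ls_residual Phi v T"
  have col: "column j Phi = Phi *v e"
    by (simp add: e_def matrix_vector_mult_basis)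
  have "card (T \<union> supp x_rest \<union> supp e) \<le> card (T \<union> supp x_rest) + 1"
    by (simp add: e_def supp_axis card_insert_le_m1)
  then have "\<bar>h \<bullet> ls_residual Phi (Phi *v e) T\<bar> \<le> d * norm x_rest * norm e"
    using assms T_subset card_T_union_supp_x_rest
    by (intro rip_bound_inner_ls_residual[OF rip, of x_rest T e, folded h_def]) (auto simp: e_def supp_axis)
  then have "\<bar>column j Phi \<bullet> h\<bar> \<le> d * norm x_rest"
    using inner_ls_residual[of Phi "Phi *v x_rest" T "Phi *v e"]
    by (simp add: col e_def h_def inner_commute)
  moreover have "\<bar>column j Phi \<bullet> w\<bar> \<le> sqrt (1 + d) * norm v"
  proof -
    have "norm (column j Phi) * norm w \<le> sqrt (1 + d) * norm v"
      using rip_bound_norm_column[OF rip, of j] norm_ls_residual_le[of Phi v T] rip_bound_nonneg[OF rip]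
      unfolding w_def by (intro mult_mono) simp_all
    then show ?thesis
      using Cauchy_Schwarz_ineq2[of "column j Phi" w] by linarith
  qed
  ultimately show ?thesis
    using residual_eq unfolding h_def[symmetric] w_def[symmetric] by (simp add: inner_add_right)
qed

lemma wrong_selection_bound:
  assumes S: "supp x - T \<noteq> {}" and j: "j \<notin> supp x"
    and max: "\<forall>i. i \<notin> T \<longrightarrow> \<bar>column i Phi \<bullet> residual\<bar> \<le> \<bar>column j Phi \<bullet> residual\<bar>"
  shows "(1 - (sqrt (card (supp x - T)) + 1) * d) * norm x_rest
    \<le> (1 + sqrt (card (supp x - T))) * sqrt (1 + d) * norm v"
proof -
  define q U M where "q = sqrt (card (supp x - T))" and "U = norm x_rest"
    and "M = \<bar>column j Phi \<bullet> residual\<bar>"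
  have "supp x_rest \<noteq> {}"
    using S by auto
  then have U_pos: "0 < U"
    unfolding U_def by (metis supp_eq_empty_iff zero_less_norm_iff)
  have "(1 - d) * U^2 - sqrt (1 + d) * U * norm v \<le> q * U * M"
    using correct_correlation[OF S, of M] max by (simp add: q_def U_def M_def)
  also have "\<dots> \<le> q * U * (d * U + sqrt (1 + d) * norm v)"
    using wrong_correlation[OF j] by (intro mult_left_mono) (simp_all add: q_def U_def M_def)
  finally have "U * ((1 - d) * U - sqrt (1 + d) * norm v) \<le> U * (q * d * U + q * sqrt (1 + d) * norm v)"
    by (simp add: power2_eq_square algebra_simps)
  then have "(1 - d) * U - sqrt (1 + d) * norm v \<le> q * d * U + q * sqrt (1 + d) * norm v"
    using U_pos by simp
  then show ?thesis
    by (simp add: q_def U_def algebra_simps)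
qed

lemma omp_step_selects_support:
  assumes S: "supp x - T \<noteq> {}"
    and max: "\<forall>i. i \<notin> T \<longrightarrow> \<bar>column i Phi \<bullet> residual\<bar> \<le> \<bar>column j Phi \<bullet> residual\<bar>"
    and m: "0 \<le> m" "\<forall>i\<in>supp x. m \<le> (x $ i)^2"
    and margin: "2 * sqrt (1 + d) * norm v < (1 - (sqrt K + 1) * d) * sqrt m"
  shows "j \<in> supp x"
proof (rule ccontr)
  assume j: "j \<notin> supp x"
  define q D where "q = sqrt (card (supp x - T))" and "D = 1 - (sqrt K + 1) * d"
  have d: "0 \<le> d"
    using rip by (rule rip_bound_nonneg)
  have noise: "0 \<le> sqrt (1 + d) * norm v"
    using d by simp
  then have "0 < D * sqrt m"
    using margin unfolding D_def by linarith
  then have D: "0 < D"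
    using m(1) by (simp add: zero_less_mult_iff)
  have "card (supp x - T) \<le> K"
    using card_supp_x card_mono[of "supp x" "supp x - T"] by simp
  moreover have "1 \<le> card (supp x - T)"
    using S by (simp add: Suc_le_eq card_gt_0_iff)
  ultimately have q: "q \<le> sqrt K" "1 \<le> q"
    by (simp_all add: q_def)
  have "card (supp x - T) * m \<le> (\<Sum>i\<in>supp x - T. (x $ i)^2)"
    using m(2) sum_mono[of "supp x - T" "\<lambda>_. m"] by simp
  also have "\<dots> = norm x_rest^2"
    by (subst norm_sq_eq_sum_supp[of _ "supp x - T"]) (auto simp: vec_restrict_nth)
  finally have U: "q * sqrt m \<le> norm x_rest"
    using real_sqrt_le_mono by (fastforce simp: q_def real_sqrt_mult)
  have "D * (q * sqrt m) \<le> D * norm x_rest"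
    using D U by simp
  also have "\<dots> \<le> (1 - (q + 1) * d) * norm x_rest"
    using q d by (intro mult_right_mono) (simp_all add: D_def algebra_simps mult_left_mono)
  also have "\<dots> \<le> (1 + q) * sqrt (1 + d) * norm v"
    using wrong_selection_bound[OF S j max] by (simp add: q_def)
  also have "\<dots> \<le> q * (2 * sqrt (1 + d) * norm v)"
    using mult_right_mono[OF _ noise, of "1 + q" "2 * q"] q by (simp add: algebra_simps)
  also have "\<dots> < q * (D * sqrt m)"
    using margin q by (simp add: D_def)
  finally show False
    by (simp add: algebra_simps)
qed

end

lemma omp_run_selects:
  assumes "omp_run Phi y K t" "k \<in> {1..K}"
  shows "t k \<notin> t ` {1..<k}"
    and "\<forall>i. i \<notin> t ` {1..<k} \<longrightarrow> \<bar>column i Phi \<bullet> ls_residual Phi y (t ` {1..<k})\<bar>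
      \<le> \<bar>column (t k) Phi \<bullet> ls_residual Phi y (t ` {1..<k})\<bar>"
  using assms unfolding omp_run_def Let_def by blast+

lemma omp_run_inj_on:
  assumes "omp_run Phi y K t"
  shows "inj_on t {1..K}"
proof -
  have "t a \<noteq> t b" if "a \<in> {1..K}" "b \<in> {1..K}" "a < b" for a b
  proof -
    have "t a \<in> t ` {1..<b}"
      using that by auto
    then show ?thesis
      using omp_run_selects(1)[OF assms that(2)] by auto
  qed
  then show ?thesis
    by (metis inj_onI linorder_neqE_nat)
qed

lemma omp_run_recovers_support:
  fixes Phi :: "real^'n^'m" and A :: "'n set"
  assumes run: "omp_run Phi y K t" and card_A: "card A = K"
    and step: "\<And>T j. T \<subseteq> A \<Longrightarrow> A - T \<noteq> {} \<Longrightarrow>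
      \<forall>i. i \<notin> T \<longrightarrow>
        \<bar>column i Phi \<bullet> ls_residual Phi y T\<bar> \<le> \<bar>column j Phi \<bullet> ls_residual Phi y T\<bar> \<Longrightarrow>
      j \<in> A"
  shows "(\<forall>k\<in>{1..K}. t k \<in> A) \<and> t ` {1..K} = A"
proof -
  have in_A: "t k \<in> A" if "k \<in> {1..K}" for k
    using that
  proof (induction k rule: less_induct)
    case (less k)
    have previous: "t ` {1..<k} \<subseteq> A"
      using less by auto
    have "card (t ` {1..<k}) < card A"
      using card_image_le[of "{1..<k}" t] less.prems card_A by auto
    then have "A - t ` {1..<k} \<noteq> {}"
      using card_mono[of "t ` {1..<k}" A] by (metis Diff_eq_empty_iff finite leD)
    then show ?case
      using step[OF previous] omp_run_selects(2)[OF run less.prems] by blast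
  qed
  have "card (t ` {1..K}) = card A"
    using omp_run_inj_on[OF run] by (simp add: card_image card_A)
  moreover have "t ` {1..K} \<subseteq> A"
    using in_A by blast
  ultimately show ?thesis
    using in_A card_subset_eq[of A "t ` {1..K}"] by auto
qed

lemma margin_if_sqrt_snr_gt:
  fixes Phi :: "real^'n^'m" and x :: "real^'n" and v :: "real^'m"
  assumes rip: "rip_bound Phi s d" and card: "card (supp x) \<le> s" and "x \<noteq> 0"
    and D: "0 < D"
    and snr: "v \<noteq> 0 \<Longrightarrow> sqrt (norm (Phi *v x)^2 / norm v^2) >
      2 * sqrt (card (supp x)) * (1 + d) / (D * sqrt (MAR x))"
  shows "2 * sqrt (1 + d) * norm v < D * sqrt (Min ((\<lambda>j. \<bar>x $ j\<bar>^2) ` supp x))"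
proof -
  define m where "m = Min ((\<lambda>j. \<bar>x $ j\<bar>^2) ` supp x)"
  have "supp x \<noteq> {}"
    using \<open>x \<noteq> 0\<close> by simp
  then have "m \<in> (\<lambda>j. \<bar>x $ j\<bar>^2) ` supp x"
    unfolding m_def by (intro Min_in) auto
  then have m: "0 < m"
    by (auto simp: supp_def)
  show ?thesis
  proof (cases "v = 0")
    case True
    then show ?thesis
      using D m by (simp add: m_def)
  next
    case False
    define k p where "k = sqrt (card (supp x))" and "p = sqrt (1 + d)"
    have d: "0 \<le> d"
      using rip by (rule rip_bound_nonneg)
    have pos: "0 < norm x" "0 < norm v" "0 < k" "0 < sqrt m" "0 < p"
      using \<open>x \<noteq> 0\<close> False \<open>supp x \<noteq> {}\<close> m d by (auto simp: k_def p_def card_gt_0_iff)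
    have "sqrt (MAR x) = sqrt m * k / norm x"
      by (simp add: MAR_def m_def k_def real_sqrt_divide real_sqrt_mult)
    then have "2 * k * (1 + d) / (D * sqrt (MAR x)) = 2 * (1 + d) * norm x / (D * sqrt m)"
      using pos by simp
    then have "2 * (1 + d) * norm x / (D * sqrt m) < norm (Phi *v x) / norm v"
      using snr[OF False, folded k_def] by (simp add: real_sqrt_divide)
    then have "2 * (1 + d) * norm x * norm v < norm (Phi *v x) * (D * sqrt m)"
      using pos D by (simp add: field_simps)
    also have "\<dots> \<le> p * norm x * (D * sqrt m)"
      using norm_le_sqrt_mult_if_sq_le[OF rip_bound_upper[OF rip card]] pos D
      by (intro mult_right_mono) (simp_all add: p_def)
    finally have "(p * norm x) * (2 * p * norm v) < (p * norm x) * (D * sqrt m)"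
      using d by (simp add: p_def algebra_simps)
    then show ?thesis
      using pos by (simp add: m_def p_def)
  qed
qed

theorem theorem1:
  fixes Phi :: "real^'n^'m" and x :: "real^'n" and v y :: "real^'m" and K :: nat
  assumes "K \<ge> 1"
    and "\<exists>c. rip_bound Phi (K + 1) c"
    and "rip_delta Phi (K + 1) < 1 / (sqrt (real K) + 1)"
    and "card (supp x) = K"
    and "y = Phi *v x + v"
    and "(if v = 0 then True else sqrt (norm (Phi *v x) ^ 2 / norm v ^ 2) >
           2 * sqrt (real K) * (1 + rip_delta Phi (K + 1)) /
           ((1 - (sqrt (real K) + 1) * rip_delta Phi (K + 1)) * sqrt (MAR x)))"
    and "omp_run Phi y K t"
  shows "(\<forall>k\<in>{1..K}. t k \<in> supp x) \<and> t ` {1..K} = supp x"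
proof -
  define d where "d = rip_delta Phi (K + 1)"
  define m where "m = Min ((\<lambda>j. \<bar>x $ j\<bar>^2) ` supp x)"
  have rip: "rip_bound Phi (K + 1) d"
    unfolding d_def using assms(2) by (rule rip_bound_rip_delta)
  have "0 < 1 - (sqrt K + 1) * d"
    using assms(3) by (simp add: d_def field_simps add_pos_nonneg)
  moreover have "x \<noteq> 0"
    using assms(1,4) by auto
  ultimately have margin: "2 * sqrt (1 + d) * norm v < (1 - (sqrt K + 1) * d) * sqrt m"
    using margin_if_sqrt_snr_gt[OF rip _ _ _, of x "1 - (sqrt K + 1) * d" v] assms(4,6)
    by (simp add: d_def m_def split: if_splits)
  have m: "0 \<le> m" "\<forall>i\<in>supp x. m \<le> (x $ i)^2"
    using \<open>x \<noteq> 0\<close> by (auto simp: m_def Min_ge_iff intro!: Min_le)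
  show ?thesis
    using omp_run_recovers_support[OF assms(7,4)]
      omp_step_selects_support[OF rip assms(4) _ _ _ m margin] assms(5) by blast
qed

end
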